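(* In the setting described in the context, for each $t\in(0,T_{max})$ and any $r\in(0,R)$ we have \[ -\frac{\mu R^n}{n}\,r^{1-n}\le v_r(r,t)\le\frac{\mu}{n}\,r,\qquad |v_r(r,t)|\le\frac{\|u(\cdot,t)\|_{L^\infty((0,R))}}{n}\,r,\qquad |v_{rr}(r,t)|\le\|u(\cdot,t)\|_{L^\infty((0,R))}. \]
   Context: Let $n\ge1$, $R>0$, $\Omega=B_R(0)\subset\mathbb{R}^n$, $\chi>0$, and let $u_0\in C^3(\bar\Omega)$ be radially symmetric and positive in $\bar\Omega$ with $\partial u_0/\partial\nu=0$ on $\partial\Omega$; let $\mu:=\frac{1}{|\Omega|}\int_\Omega u_0$. Let $T_{max}\in(0,\infty]$ and $(u,v)$ denote the maximally extended classical solution of the problem $u_t=\nabla\cdot\big(\frac{u\nabla u}{\sqrt{u^2+|\nabla u|^2}}\big)-\chi\nabla\cdot\big(\frac{u\nabla v}{\sqrt{1+|\nabla v|^2}}\big)$, $0=\Delta v-\mu+u$ in $\Omega\times(0,T_{max})$, $\big(\frac{u\nabla u}{\sqrt{u^2+|\nabla u|^2}}-\chi\frac{u\nabla v}{\sqrt{1+|\nabla v|^2}}\big)\cdot\nu=0$ on $\partial\Omega$, $u(\cdot,0)=u_0$; that is, $u\in C^{2,1}(\bar\Omega\times[0,T_{max}))$ and $v\in C^{2,0}(\bar\Omega\times[0,T_{max}))$ are the uniquely determined positive radially symmetric functions solving this problem classically, and $T_{max}$ is the maximal time of existence of this classical solution. By radial symmetry we write $u(r,t)$, $v(r,t)$ with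 $r=|x|\in(0,R)$, and subscripts $r$ denote radial derivatives. *)

theory Defs
  imports "HOL-Analysis.Analysis"
begin

text \<open>Partial derivative of a scalar field on real^'n in coordinate direction i,
  taken within the set S (so that one-sided derivatives on the boundary of a closed
  ball are covered).\<close>
definition pd :: "(real^'n \<Rightarrow> real) \<Rightarrow> (real^'n) set \<Rightarrow> 'n \<Rightarrow> real^'n \<Rightarrow> real" where
  "pd f S i x = frechet_derivative f (at x within S) (axis i 1)"

definition sgrad :: "(real^'n \<Rightarrow> real) \<Rightarrow> (real^'n) set \<Rightarrow> real^'n \<Rightarrow> real^'n" where
  "sgrad f S x = (\<chi> i. pd f S i x)"

definition sdiv :: "(real^'n \<Rightarrow> real^'n) \<Rightarrow> (real^'n) set \<Rightarrow> real^'n \<Rightarrow> real" where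
  "sdiv F S x = (\<Sum>i\<in>UNIV. pd (\<lambda>y. F y $ i) S i x)"

definition slap :: "(real^'n \<Rightarrow> real) \<Rightarrow> (real^'n) set \<Rightarrow> real^'n \<Rightarrow> real" where
  "slap f S x = sdiv (sgrad f S) S x"

fun Ck :: "nat \<Rightarrow> (real^'n \<Rightarrow> real) \<Rightarrow> (real^'n) set \<Rightarrow> bool" where
  "Ck 0 f S = continuous_on S f"
| "Ck (Suc k) f S = (continuous_on S f \<and> (\<forall>x\<in>S. f differentiable (at x within S))
      \<and> (\<forall>i. Ck k (pd f S i) S))"

definition tder :: "(real^'n \<Rightarrow> real \<Rightarrow> real) \<Rightarrow> real set \<Rightarrow> real^'n \<Rightarrow> real \<Rightarrow> real" where
  "tder w I x t = frechet_derivative (\<lambda>s. w x s) (at t within I) 1"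

definition C20 :: "(real^'n \<Rightarrow> real \<Rightarrow> real) \<Rightarrow> (real^'n) set \<Rightarrow> real set \<Rightarrow> bool" where
  "C20 w S I \<longleftrightarrow>
     (\<forall>t\<in>I. Ck 2 (\<lambda>x. w x t) S)
   \<and> continuous_on (S \<times> I) (\<lambda>(x,t). w x t)
   \<and> (\<forall>i. continuous_on (S \<times> I) (\<lambda>(x,t). pd (\<lambda>z. w z t) S i x))
   \<and> (\<forall>i j. continuous_on (S \<times> I) (\<lambda>(x,t). pd (pd (\<lambda>z. w z t) S i) S j x))"

definition C21 :: "(real^'n \<Rightarrow> real \<Rightarrow> real) \<Rightarrow> (real^'n) set \<Rightarrow> real set \<Rightarrow> bool" where
  "C21 w S I \<longleftrightarrow> C20 w S I
   \<and> (\<forall>x\<in>S. \<forall>t\<in>I. (\<lambda>s. w x s) differentiable (at t within I))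
   \<and> continuous_on (S \<times> I) (\<lambda>(x,t). tder w I x t)"

definition radial_on :: "(real^'n \<Rightarrow> real \<Rightarrow> real) \<Rightarrow> real \<Rightarrow> real set \<Rightarrow> bool" where
  "radial_on w R I \<longleftrightarrow> (\<forall>x y t. norm x \<le> R \<and> norm y \<le> R \<and> norm x = norm y \<and> t \<in> I
      \<longrightarrow> w x t = w y t)"

definition classical_solution ::
  "real \<Rightarrow> real \<Rightarrow> real \<Rightarrow> (real^'n \<Rightarrow> real) \<Rightarrow> ereal
   \<Rightarrow> (real^'n \<Rightarrow> real \<Rightarrow> real) \<Rightarrow> (real^'n \<Rightarrow> real \<Rightarrow> real) \<Rightarrow> bool" where
  "classical_solution R chi \<mu> u0 T u v \<longleftrightarrow>
    (let S = cball (0::real^'n) R; I = {t::real. 0 \<le> t \<and> ereal t < T};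
         gu = (\<lambda>t. sgrad (\<lambda>z. u z t) S); gv = (\<lambda>t. sgrad (\<lambda>z. v z t) S);
         A = (\<lambda>t y. (u y t / sqrt ((u y t)^2 + (norm (gu t y))^2)) *\<^sub>R gu t y);
         B = (\<lambda>t y. (u y t / sqrt (1 + (norm (gv t y))^2)) *\<^sub>R gv t y)
     in C21 u S I \<and> C20 v S I
      \<and> (\<forall>x\<in>S. \<forall>t\<in>I. u x t > 0 \<and> v x t > 0)
      \<and> radial_on u R I \<and> radial_on v R I
      \<and> (\<forall>x. norm x < R \<longrightarrow> (\<forall>t. 0 < t \<and> ereal t < T \<longrightarrow>
            tder u I x t = sdiv (A t) S x - chi * sdiv (B t) S x
          \<and> 0 = slap (\<lambda>z. v z t) S x - \<mu> + u x t))
      \<and> (\<forall>x. norm x = R \<longrightarrow> (\<forall>t. 0 < t \<and> ereal t < T \<longrightarrow>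
            (A t x - chi *\<^sub>R B t x) \<bullet> (inverse R *\<^sub>R x) = 0))
      \<and> (\<forall>x\<in>S. u x 0 = u0 x))"

end

theory Submission
  imports Defs
begin

text \<open>
  In radial coordinates the elliptic equation reads (r^(n-1) v_r)_r = r^(n-1) (\<mu> - u), and
  v_r(0) = 0 by symmetry, so r^(n-1) v_r(r) = \<mu> r^n / n - P(r) with P(r) the integral of s^(n-1) u(s) over [0, r].
  The equation for u is in divergence form and the total flux vanishes at the centre by symmetry
  and at R by the boundary condition; hence P(R) is conserved in time, and by polar coordinates it
  equals \<mu> R^n / n. With M = sup u, the bounds 0 \<le> P(r) \<le> min (\<mu> R^n / n) (M r^n / n) give the estimates
  for v_r, and v_rr = \<mu> - u - (n - 1) v_r / r gives the one for v_rr.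
\<close>

section \<open>Derivatives of radial functions\<close>

lemma pd_eq_at_interior:
  assumes "x \<in> interior S" "(f has_derivative f') (at x)"
  shows "pd f S i x = f' (axis i 1)"
  unfolding pd_def at_within_interior[OF assms(1)] frechet_derivative_at[OF assms(2), symmetric] ..

lemma has_derivative_norm_inner:
  fixes x :: "'a::real_inner"
  assumes "x \<noteq> 0"
  shows "(norm has_derivative (\<lambda>h. x \<bullet> h / norm x)) (at x)"
  using has_derivative_norm[OF assms]
  by (rule has_derivative_eq_rhs) (auto simp: sgn_div_norm inner_commute divide_inverse mult.commute)

lemma has_derivative_sgrad:
  fixes f :: "real^'n \<Rightarrow> real"
  assumes "x \<in> interior S" "f differentiable (at x)"
  shows "(f has_derivative (\<lambda>h. sgrad f S x \<bullet> h)) (at x)"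
proof -
  obtain D where D: "(f has_derivative D) (at x)"
    using assms(2) differentiable_def by blast
  have "D = (\<lambda>h. sgrad f S x \<bullet> h)"
  proof
    fix h
    have "D h = D (\<Sum>i\<in>UNIV. h $ i *\<^sub>R axis i 1)"
      using basis_expansion[of h] by (simp add: scalar_mult_eq_scaleR)
    also have "\<dots> = (\<Sum>i\<in>UNIV. h $ i * D (axis i 1))"
      using has_derivative_linear[OF D] by (simp add: linear_sum linear_scale)
    finally show "D h = sgrad f S x \<bullet> h"
      unfolding sgrad_def inner_vec_def pd_eq_at_interior[OF assms(1) D] by (simp add: mult.commute)
  qed
  with D show ?thesis
    by simp
qed

lemma has_derivative_radial:
  fixes f :: "real^'n \<Rightarrow> real"
  assumes "0 < norm x" "norm x < R" "\<And>y. norm y < R \<Longrightarrow> f y = g (norm y)"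
    and "(g has_real_derivative g') (at (norm x))"
  shows "(f has_derivative (\<lambda>h. g' * (x \<bullet> h / norm x))) (at x)"
proof -
  have "((\<lambda>y. g (norm y)) has_derivative (\<lambda>h. g' * (x \<bullet> h / norm x))) (at x)"
    using has_derivative_compose[OF has_derivative_norm_inner assms(4)[unfolded has_field_derivative_def]]
      assms(1) by auto
  then show ?thesis
    by (rule has_derivative_transform_within_open[where s="ball 0 R"]) (use assms in auto)
qed

lemma sgrad_radial:
  fixes f :: "real^'n \<Rightarrow> real"
  assumes "0 < norm x" "norm x < R" "\<And>y. norm y < R \<Longrightarrow> f y = g (norm y)"
    and "(g has_real_derivative g') (at (norm x))"
  shows "sgrad f (cball 0 R) x = (g' / norm x) *\<^sub>R x"
  using pd_eq_at_interior[OF _ has_derivative_radial[OF assms]] assms(1,2)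
  by (simp add: sgrad_def vec_eq_iff inner_axis)

lemma sdiv_radial:
  fixes F :: "real^'n \<Rightarrow> real^'n"
  assumes "0 < norm x" "norm x < R"
    and "\<And>y. 0 < norm y \<Longrightarrow> norm y < R \<Longrightarrow> F y = (a (norm y) / norm y) *\<^sub>R y"
    and "(a has_real_derivative a') (at (norm x))"
  shows "sdiv F (cball 0 R) x = a' + (real CARD('n) - 1) * a (norm x) / norm x"
proof -
  define \<rho> where "\<rho> = norm x"
  have x0: "x \<noteq> 0" and \<rho>: "\<rho> > 0"
    using assms(1) by (auto simp: \<rho>_def)
  define q' where "q' = a' / \<rho> - a \<rho> / \<rho>\<^sup>2"
  have q: "((\<lambda>s. a s / s) has_real_derivative q') (at \<rho>)"
    unfolding q'_def using assms(4) \<rho> unfolding \<rho>_def[symmetric]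
    by (auto intro!: derivative_eq_intros simp: field_simps power2_eq_square)
  have pd_i: "pd (\<lambda>y. F y $ i) (cball 0 R) i x = a \<rho> / \<rho> + q' * (x $ i / \<rho>) * x $ i" for i
  proof -
    have "((\<lambda>y. a (norm y) / norm y * y $ i) has_derivative
        (\<lambda>h. a \<rho> / \<rho> * h $ i + q' * (x \<bullet> h / \<rho>) * x $ i)) (at x)"
      using has_derivative_mult[OF has_derivative_compose[OF has_derivative_norm_inner[OF x0]
            q[unfolded has_field_derivative_def \<rho>_def]]
          bounded_linear.has_derivative[OF bounded_linear_vec_nth has_derivative_ident]]
      by (simp add: \<rho>_def)
    then have "((\<lambda>y. F y $ i) has_derivative
        (\<lambda>h. a \<rho> / \<rho> * h $ i + q' * (x \<bullet> h / \<rho>) * x $ i)) (at x)"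
      by (rule has_derivative_transform_within_open[where s="ball 0 R - {0}"]) (use assms in auto)
    from pd_eq_at_interior[OF _ this] assms(1,2) show ?thesis
      by (simp add: inner_axis)
  qed
  have "sdiv F (cball 0 R) x = (\<Sum>i\<in>UNIV. a \<rho> / \<rho> + q' / \<rho> * (x $ i * x $ i))"
    unfolding sdiv_def pd_i by (simp add: algebra_simps)
  also have "\<dots> = real CARD('n) * (a \<rho> / \<rho>) + q' / \<rho> * \<rho>\<^sup>2"
    by (simp add: sum.distrib sum_distrib_left[symmetric] sum_divide_distrib[symmetric] \<rho>_def power2_norm_eq_inner inner_vec_def)
  also have "\<dots> = a' + (real CARD('n) - 1) * a \<rho> / \<rho>"
    unfolding q'_def using \<rho> by (simp add: field_simps power2_eq_square)
  finally show ?thesis unfolding \<rho>_def .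
qed

lemma sgrad_even_zero:
  fixes f :: "real^'n \<Rightarrow> real"
  assumes "R > 0" "\<And>y. norm y < R \<Longrightarrow> f (- y) = f y" "f differentiable (at 0)"
  shows "sgrad f (cball 0 R) 0 = 0"
proof -
  obtain D where D: "(f has_derivative D) (at 0)"
    using assms(3) differentiable_def by blast
  have "((\<lambda>y. f (- y)) has_derivative (\<lambda>h. D (- h))) (at 0)"
    using has_derivative_compose[OF has_derivative_minus[OF has_derivative_ident], of f D] D by simp
  then have "(f has_derivative (\<lambda>h. D (- h))) (at 0)"
    by (rule has_derivative_transform_within_open[where s="ball 0 R"]) (use assms in auto)
  then have "D h = - D h" for h
    using has_derivative_unique[OF D] linear_neg[OF has_derivative_linear[OF D]] by metis
  then show ?thesis
    using pd_eq_at_interior[OF _ D] assms(1) by (simp add: sgrad_def vec_eq_iff)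
qed

lemma differentiable_sqrt:
  fixes q :: "real \<Rightarrow> real"
  assumes "q differentiable (at s)" "0 < q s"
  shows "(\<lambda>s. sqrt (q s)) differentiable (at s)"
  using differentiable_chain_at[OF assms(1), of sqrt] DERIV_real_sqrt[OF assms(2)]
  by (auto simp: o_def real_differentiable_def)

lemma has_real_derivative_frechet_derivative:
  fixes f :: "real \<Rightarrow> real"
  assumes "f differentiable F"
  shows "(f has_real_derivative frechet_derivative f F 1) F"
proof (rule has_derivative_imp_has_field_derivative)
  show D: "(f has_derivative frechet_derivative f F) F"
    using assms frechet_derivative_works by blast
  show "h * frechet_derivative f F 1 = frechet_derivative f F h" for h
    using linear_scale[OF has_derivative_linear[OF D], of h 1] by simp
qed

section \<open>Integrals of radial functions\<close>

lemma integrable_on_compact_continuous: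
  fixes f :: "'a::euclidean_space \<Rightarrow> real"
  assumes "compact S" "continuous_on S f"
  shows "f integrable_on S"
proof -
  have "integrable lborel (\<lambda>x. indicator S x *\<^sub>R f x)"
    by (rule borel_integrable_compact[OF assms])
  from has_integral_integral_lborel[OF this]
  have "((\<lambda>x. if x \<in> S then f x else 0) has_integral integral\<^sup>L lborel (\<lambda>x. indicator S x *\<^sub>R f x)) UNIV"
    by (rule has_integral_eq[rotated]) (simp add: indicator_def)
  then show ?thesis
    unfolding has_integral_restrict_UNIV integrable_on_def by blast
qed

lemma measure_lebesgue_cball:
  "r \<ge> 0 \<Longrightarrow> measure lebesgue (cball (0::real^'n) r) = unit_ball_vol (real CARD('n)) * r ^ CARD('n)"
  using content_cball[of r "0::real^'n"] by (simp add: measure_completion)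

lemma measure_lebesgue_ball:
  "r \<ge> 0 \<Longrightarrow> measure lebesgue (ball (0::real^'n) r) = unit_ball_vol (real CARD('n)) * r ^ CARD('n)"
  using content_ball[of r "0::real^'n"] by (simp add: measure_completion)

lemma integral_cball_increment_bound:
  fixes f :: "real^'n \<Rightarrow> real"
  assumes "0 \<le> a" "a \<le> b" "continuous_on (cball 0 b) f"
    and "\<And>y. a \<le> norm y \<Longrightarrow> norm y \<le> b \<Longrightarrow> \<bar>f y - k\<bar> \<le> \<epsilon>"
  defines "m \<equiv> \<lambda>r. measure lebesgue (cball (0::real^'n) r)"
  shows "\<bar>integral (cball 0 b) f - integral (cball 0 a) f - k * (m b - m a)\<bar> \<le> \<epsilon> * (m b - m a)"
proof -
  define D where "D = cball (0::real^'n) b - cball 0 a"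
  have sub: "cball (0::real^'n) a \<subseteq> cball 0 b"
    using assms(2) by auto
  have "f integrable_on cball 0 b" "f integrable_on cball 0 a"
    using assms(3) continuous_on_subset[OF assms(3) sub] by (auto intro: integrable_on_compact_continuous)
  then have f_D: "(f has_integral integral (cball 0 b) f - integral (cball 0 a) f) D"
    unfolding D_def using sub by (intro has_integral_setdiff integrable_integral) auto
  have D: "D \<in> lmeasurable"
    unfolding D_def by (intro lmeasurable_compact fmeasurable_Diff) auto
  have one_D: "((\<lambda>_. 1) has_integral m b - m a) D"
  proof -
    have "measure lebesgue D = m b - m a"
      unfolding D_def m_def using sub by (intro measurable_measure_Diff) (simp_all add: lmeasurable_cball)
    then show ?thesis
      using lmeasure_integral[OF D] integrable_on_const[OF D] by (simp add: has_integral_iff)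
  qed
  have k_D: "((\<lambda>_. k) has_integral k * (m b - m a)) D" and \<epsilon>_D: "((\<lambda>_. \<epsilon>) has_integral \<epsilon> * (m b - m a)) D"
    using has_integral_mult_right[OF one_D, of k] has_integral_mult_right[OF one_D, of \<epsilon>] by simp_all
  have "((\<lambda>y. f y - k) has_integral integral (cball 0 b) f - integral (cball 0 a) f - k * (m b - m a)) D"
    by (intro has_integral_diff f_D k_D)
  moreover have "\<bar>f y - k\<bar> \<le> \<epsilon>" if "y \<in> D" for y
    using that assms(4) unfolding D_def by auto
  ultimately show ?thesis
    using integral_norm_bound_integral[of "\<lambda>y. f y - k" D "\<lambda>_. \<epsilon>"] \<epsilon>_D
    by (simp add: has_integral_integrable integral_unique)
qed

lemma has_real_derivative_by_increment_comparison:
  fixes F V :: "real \<Rightarrow> real"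
  assumes V: "(V has_real_derivative V') (at r within S)"
    and close: "\<And>\<epsilon>. \<epsilon> > 0 \<Longrightarrow>
      \<forall>\<^sub>F s in at r within S. \<bar>F s - F r - c * (V s - V r)\<bar> \<le> \<epsilon> * \<bar>V s - V r\<bar>"
  shows "(F has_real_derivative c * V') (at r within S)"
proof -
  define q where "q s = (V s - V r) / (s - r)" for s
  have q: "(q \<longlongrightarrow> V') (at r within S)"
    using V unfolding has_field_derivative_iff q_def .
  have "((\<lambda>s. (F s - F r) / (s - r) - c * q s) \<longlongrightarrow> 0) (at r within S)"
  proof (rule tendstoI)
    fix \<epsilon> :: real
    assume "\<epsilon> > 0"
    define \<delta> where "\<delta> = \<epsilon> / (2 * (\<bar>V'\<bar> + 1))"
    have \<delta>: "\<delta> > 0" "\<delta> * (\<bar>V'\<bar> + 1) < \<epsilon>"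
      using \<open>\<epsilon> > 0\<close> by (auto simp: \<delta>_def field_simps add_pos_nonneg)
    have "\<forall>\<^sub>F s in at r within S. dist (q s) V' < 1"
      using tendstoD[OF q] by simp
    moreover have "\<forall>\<^sub>F s in at r within S. s \<noteq> r"
      by (simp add: eventually_at_filter)
    ultimately show "\<forall>\<^sub>F s in at r within S. dist ((F s - F r) / (s - r) - c * q s) 0 < \<epsilon>"
      using close[OF \<delta>(1)]
    proof eventually_elim
      case (elim s)
      have "\<bar>(F s - F r) / (s - r) - c * q s\<bar> = \<bar>F s - F r - c * (V s - V r)\<bar> / \<bar>s - r\<bar>"
        using elim(2) by (simp add: q_def diff_divide_distrib[symmetric] abs_divide)
      also have "\<dots> \<le> \<delta> * \<bar>q s\<bar>"
        using elim(3) by (simp add: q_def abs_divide divide_right_mono)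
      also have "\<dots> \<le> \<delta> * (\<bar>V'\<bar> + 1)"
        using elim(1) \<delta>(1) by (intro mult_left_mono) (auto simp: dist_real_def)
      finally show ?case
        using \<delta>(2) by simp
    qed
  qed
  then have "((\<lambda>s. ((F s - F r) / (s - r) - c * q s) + c * q s) \<longlongrightarrow> 0 + c * V') (at r within S)"
    by (intro tendsto_add tendsto_mult tendsto_const q)
  then show ?thesis
    unfolding has_field_derivative_iff by simp
qed

lemma integral_cball_increment_bound_abs:
  fixes f :: "real^'n \<Rightarrow> real"
  assumes "0 \<le> a" "0 \<le> b" "continuous_on (cball 0 (max a b)) f"
    and "\<And>y. min a b \<le> norm y \<Longrightarrow> norm y \<le> max a b \<Longrightarrow> \<bar>f y - k\<bar> \<le> \<epsilon>"
  defines "m \<equiv> \<lambda>r. measure lebesgue (cball (0::real^'n) r)"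
  shows "\<bar>integral (cball 0 b) f - integral (cball 0 a) f - k * (m b - m a)\<bar> \<le> \<epsilon> * \<bar>m b - m a\<bar>"
proof (cases "a \<le> b")
  case True
  then have "m a \<le> m b"
    unfolding m_def by (intro measure_mono_fmeasurable) auto
  then show ?thesis
    using integral_cball_increment_bound[of a b f k \<epsilon>] assms True by (simp add: m_def)
next
  case False
  then have "m b \<le> m a"
    unfolding m_def by (intro measure_mono_fmeasurable) auto
  moreover have "\<bar>integral (cball 0 a) f - integral (cball 0 b) f - k * (m a - m b)\<bar> \<le> \<epsilon> * (m a - m b)"
    using integral_cball_increment_bound[of b a f k \<epsilon>] assms False by (simp add: m_def)
  ultimately show ?thesis
    by (simp add: abs_minus_commute algebra_simps)
qed

lemma has_real_derivative_integral_cball: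
  fixes f :: "real^'n \<Rightarrow> real"
  assumes f: "continuous_on (cball 0 R) f" and g: "continuous_on {0..R} g"
    and f_g: "\<And>y. norm y \<le> R \<Longrightarrow> f y = g (norm y)" and r: "r \<in> {0..R}"
  shows "((\<lambda>r. integral (cball 0 r) f) has_real_derivative
      real CARD('n) * unit_ball_vol (real CARD('n)) * r ^ (CARD('n) - 1) * g r) (at r within {0..R})"
proof -
  define m where "m s = measure lebesgue (cball (0::real^'n) s)" for s
  have m: "m s = unit_ball_vol (real CARD('n)) * s ^ CARD('n)" if "s \<in> {0..R}" for s
    unfolding m_def using that by (intro measure_lebesgue_cball) simp
  have "((\<lambda>s. unit_ball_vol (real CARD('n)) * s ^ CARD('n)) has_real_derivative
      unit_ball_vol (real CARD('n)) * (real CARD('n) * r ^ (CARD('n) - 1))) (at r within {0..R})"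
    using DERIV_pow[of "CARD('n)" r "{0..R}"] by (intro DERIV_cmult) simp
  then have "(m has_real_derivative unit_ball_vol (real CARD('n)) * (real CARD('n) * r ^ (CARD('n) - 1)))
      (at r within {0..R})"
    by (rule has_field_derivative_transform_within[OF _ zero_less_one r]) (simp add: m)
  then have "((\<lambda>r. integral (cball 0 r) f) has_real_derivative
      g r * (unit_ball_vol (real CARD('n)) * (real CARD('n) * r ^ (CARD('n) - 1)))) (at r within {0..R})"
  proof (rule has_real_derivative_by_increment_comparison)
    fix \<epsilon> :: real
    assume "\<epsilon> > 0"
    then obtain d where "d > 0" and d: "\<And>s. s \<in> {0..R} \<Longrightarrow> dist s r < d \<Longrightarrow> \<bar>g s - g r\<bar> \<le> \<epsilon>"
      using g r unfolding continuous_on_iff dist_real_def by (metis less_imp_le)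
    show "\<forall>\<^sub>F s in at r within {0..R}. \<bar>integral (cball 0 s) f - integral (cball 0 r) f - g r * (m s - m r)\<bar>
        \<le> \<epsilon> * \<bar>m s - m r\<bar>"
      unfolding eventually_at
    proof (intro exI[of _ d] conjI ballI impI)
      fix s
      assume s: "s \<in> {0..R}" "s \<noteq> r \<and> dist s r < d"
      show "\<bar>integral (cball 0 s) f - integral (cball 0 r) f - g r * (m s - m r)\<bar> \<le> \<epsilon> * \<bar>m s - m r\<bar>"
        unfolding m_def
      proof (rule integral_cball_increment_bound_abs)
        show "continuous_on (cball 0 (max r s)) f"
          using r s by (intro continuous_on_subset[OF f]) auto
        fix y :: "real^'n"
        assume y: "min r s \<le> norm y" "norm y \<le> max r s"
        then have "norm y \<in> {0..R}" "dist (norm y) r < d"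
          using r s by (auto simp: dist_real_def)
        then show "\<bar>f y - g r\<bar> \<le> \<epsilon>"
          using d f_g by simp
      qed (use r s in auto)
    qed (use \<open>d > 0\<close> in simp)
  qed
  then show ?thesis
    by (simp add: mult_ac)
qed

lemma has_integral_power_pred:
  assumes "0 \<le> r" "1 \<le> N"
  shows "((\<lambda>s. s ^ (N - 1)) has_integral r ^ N / real N) {0..r}"
proof -
  have "((\<lambda>s. s ^ (N - 1)) has_integral r ^ N / real N - 0 ^ N / real N) {0..r}"
  proof (rule fundamental_theorem_of_calculus[OF assms(1)])
    fix x
    show "((\<lambda>s. s ^ N / real N) has_vector_derivative x ^ (N - 1)) (at x within {0..r})"
      unfolding has_real_derivative_iff_has_vector_derivative[symmetric]
      using assms(2) by (auto intro!: derivative_eq_intros)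
  qed
  then show ?thesis
    using assms(2) by (simp add: zero_power)
qed

lemma integral_ball_radial:
  fixes f :: "real^'n \<Rightarrow> real"
  assumes "0 \<le> R" "continuous_on (cball 0 R) f" "continuous_on {0..R} g"
    and "\<And>y. norm y \<le> R \<Longrightarrow> f y = g (norm y)"
  shows "integral (ball 0 R) f =
    real CARD('n) * unit_ball_vol (real CARD('n)) * integral {0..R} (\<lambda>s. s ^ (CARD('n) - 1) * g s)"
proof -
  define c where "c = real CARD('n) * unit_ball_vol (real CARD('n))"
  have "((\<lambda>s. c * (s ^ (CARD('n) - 1) * g s)) has_integral
      integral (cball (0::real^'n) R) f - integral (cball 0 0) f) {0..R}"
  proof (rule fundamental_theorem_of_calculus[OF assms(1)])
    fix r
    assume "r \<in> {0..R}"
    from has_real_derivative_integral_cball[OF assms(2-4) this]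
    show "((\<lambda>r. integral (cball (0::real^'n) r) f) has_vector_derivative c * (r ^ (CARD('n) - 1) * g r))
        (at r within {0..R})"
      by (simp add: has_real_derivative_iff_has_vector_derivative[symmetric] c_def mult.assoc)
  qed
  then have "((\<lambda>s. c * (s ^ (CARD('n) - 1) * g s)) has_integral integral (cball (0::real^'n) R) f) {0..R}"
    by simp
  then have "integral (cball (0::real^'n) R) f = integral {0..R} (\<lambda>s. c * (s ^ (CARD('n) - 1) * g s))"
    by (rule integral_unique[symmetric])
  also have "\<dots> = c * integral {0..R} (\<lambda>s. s ^ (CARD('n) - 1) * g s)"
    by (rule integral_mult_right)
  finally have "integral (cball (0::real^'n) R) f = c * integral {0..R} (\<lambda>s. s ^ (CARD('n) - 1) * g s)" .
  moreover have "integral (ball (0::real^'n) R) f = integral (cball 0 R) f"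
    by (rule integral_spike_set) (auto intro: negligible_subset[OF negligible_sphere[of "0::real^'n" R]])
  ultimately show ?thesis
    by (simp add: c_def)
qed

lemma has_integral_radial_divergence:
  fixes G h :: "real \<Rightarrow> real"
  assumes "0 \<le> r" "1 \<le> N" "continuous_on {0..r} G" "G 0 = 0"
    and G': "\<And>s. 0 < s \<Longrightarrow> s < r \<Longrightarrow> (G has_real_derivative G' s) (at s)"
    and h: "\<And>s. 0 < s \<Longrightarrow> s < r \<Longrightarrow> h s = s ^ (N - 1) * (G' s + (real N - 1) * G s / s)"
  shows "(h has_integral r ^ (N - 1) * G r) {0..r}"
proof -
  have "(h has_integral r ^ (N - 1) * G r - 0 ^ (N - 1) * G 0) {0..r}"
  proof (rule fundamental_theorem_of_calculus_interior[OF assms(1)])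
    show "continuous_on {0..r} (\<lambda>s. s ^ (N - 1) * G s)"
      using assms(3) by (intro continuous_intros)
    fix s
    assume s: "s \<in> {0<..<r}"
    have "((\<lambda>s. s ^ (N - 1) * G s) has_real_derivative
        real (N - 1) * s ^ (N - 1 - 1) * G s + s ^ (N - 1) * G' s) (at s)"
      using G' s by (auto intro!: derivative_eq_intros)
    moreover have "real (N - 1) * s ^ (N - 1 - 1) = (real N - 1) * s ^ (N - 1) / s"
      using s assms(2) by (cases "N - 1") (auto simp: of_nat_diff)
    ultimately show "((\<lambda>s. s ^ (N - 1) * G s) has_vector_derivative h s) (at s)"
      using s by (simp add: h has_real_derivative_iff_has_vector_derivative[symmetric] field_simps)
  qed
  then show ?thesis
    using assms(4) by simp
qed

lemma integral_conserved_by_vanishing_flux: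
  fixes U K :: "real \<Rightarrow> real \<Rightarrow> real"
  assumes "0 \<le> t"
    and U: "continuous_on {a..b} (\<lambda>s. U s 0)" "continuous_on {a..b} (\<lambda>s. U s t)"
    and K: "continuous_on ({a..b} \<times> {0..t}) (\<lambda>(s, \<tau>). K s \<tau>)"
    and UK: "\<And>s \<tau>. s \<in> {a..b} \<Longrightarrow> \<tau> \<in> {0..t} \<Longrightarrow> (U s has_real_derivative K s \<tau>) (at \<tau> within {0..t})"
    and flux: "\<And>\<tau>. 0 < \<tau> \<Longrightarrow> \<tau> \<le> t \<Longrightarrow> integral {a..b} (\<lambda>s. K s \<tau>) = 0"
  shows "integral {a..b} (\<lambda>s. U s t) = integral {a..b} (\<lambda>s. U s 0)"
proof -
  have "integral {a..b} (\<lambda>s. U s t - U s 0) = integral {a..b} (\<lambda>s. integral {0..t} (K s))"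
  proof (rule integral_cong)
    fix s
    assume "s \<in> {a..b}"
    then have "(K s has_integral U s t - U s 0) {0..t}"
      using UK by (intro fundamental_theorem_of_calculus[OF assms(1)])
        (simp add: has_real_derivative_iff_has_vector_derivative[symmetric])
    then show "U s t - U s 0 = integral {0..t} (K s)"
      by (simp add: integral_unique)
  qed
  also have "\<dots> = integral {0..t} (\<lambda>\<tau>. integral {a..b} (\<lambda>s. K s \<tau>))"
    using integral_swap_continuous[of a 0 b t K] K by (simp add: cbox_Pair_eq)
  also have "\<dots> = integral {0..t} (\<lambda>_. 0)"
    using flux by (intro integral_spike[where S="{0}"]) auto
  finally show ?thesis
    using U by (simp add: integral_diff integrable_continuous_real)
qed

section \<open>Radial profiles\<close>

definition profile :: "(real^'n \<Rightarrow> real) \<Rightarrow> real^'n \<Rightarrow> real \<Rightarrow> real" where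
  "profile w e s = w (s *\<^sub>R e)"

definition radial_deriv :: "(real^'n \<Rightarrow> real) \<Rightarrow> real \<Rightarrow> real^'n \<Rightarrow> real \<Rightarrow> real" where
  "radial_deriv w R e s = sgrad w (cball 0 R) (s *\<^sub>R e) \<bullet> e"

lemma Ck_2_iff:
  "Ck 2 f S \<longleftrightarrow> continuous_on S f \<and> (\<forall>x\<in>S. f differentiable (at x within S)) \<and>
     (\<forall>i. continuous_on S (pd f S i) \<and> (\<forall>x\<in>S. pd f S i differentiable (at x within S)) \<and>
       (\<forall>j. continuous_on S (pd (pd f S i) S j)))"
  by (simp add: numeral_2_eq_2)

locale radial_C2 =
  fixes w :: "real^'n \<Rightarrow> real" and R :: real and e :: "real^'n"
  assumes R_pos: "R > 0" and C2: "Ck 2 w (cball 0 R)"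
    and radial: "\<And>x y. norm x \<le> R \<Longrightarrow> norm y \<le> R \<Longrightarrow> norm x = norm y \<Longrightarrow> w x = w y"
    and norm_e: "norm e = 1"
begin

abbreviation "S \<equiv> cball (0::real^'n) R"

lemma eq_profile: "norm y \<le> R \<Longrightarrow> w y = profile w e (norm y)"
  unfolding profile_def using radial[of y "norm y *\<^sub>R e"] norm_e by simp

lemma continuous_on_w: "continuous_on S w"
  using C2 Ck_2_iff by blast

lemma continuous_on_sgrad: "continuous_on S (sgrad w S)"
  using C2 unfolding Ck_2_iff sgrad_def by (intro continuous_on_vec_lambda) blast

lemma differentiable_at_interior: "norm y < R \<Longrightarrow> w differentiable (at y)"
  using C2 unfolding Ck_2_iff by (metis at_within_interior interior_cball mem_ball_0 mem_cball_0 less_imp_le)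

lemma pd_differentiable_at_interior: "norm y < R \<Longrightarrow> pd w S i differentiable (at y)"
  using C2 unfolding Ck_2_iff by (metis at_within_interior interior_cball mem_ball_0 mem_cball_0 less_imp_le)

lemma continuous_on_profile: "continuous_on {0..R} (profile w e)"
  unfolding profile_def using norm_e
  by (intro continuous_on_compose2[OF continuous_on_w] continuous_intros) auto

lemma continuous_on_radial_deriv: "continuous_on {0..R} (radial_deriv w R e)"
  unfolding radial_deriv_def using norm_e
  by (intro continuous_on_compose2[OF continuous_on_sgrad] continuous_intros) auto

lemma has_real_derivative_profile:
  assumes "0 \<le> s" "s < R"
  shows "(profile w e has_real_derivative radial_deriv w R e s) (at s)"
proof -
  have "norm (s *\<^sub>R e) < R"
    using assms norm_e by simp
  then have "((\<lambda>s. w (s *\<^sub>R e)) has_derivative (\<lambda>h. sgrad w S (s *\<^sub>R e) \<bullet> (h *\<^sub>R e))) (at s)"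
    by (intro has_derivative_compose[OF has_derivative_scaleR_left[OF has_derivative_ident]]
        has_derivative_sgrad differentiable_at_interior) auto
  then show ?thesis
    unfolding has_field_derivative_def profile_def[abs_def] radial_deriv_def
    by (rule has_derivative_eq_rhs) auto
qed

lemma differentiable_radial_deriv:
  assumes "0 \<le> s" "s < R"
  shows "radial_deriv w R e differentiable (at s)"
proof -
  have "norm (s *\<^sub>R e) < R"
    using assms norm_e by simp
  then have "(\<lambda>s. pd w S i (s *\<^sub>R e)) differentiable (at s)" for i
    using differentiable_chain_at[of "\<lambda>s. s *\<^sub>R e" s "pd w S i"] pd_differentiable_at_interior
    by (simp add: o_def)
  then show ?thesis
    unfolding radial_deriv_def sgrad_def inner_vec_def
    by (intro differentiable_sum ballI differentiable_mult differentiable_const) auto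
qed

lemma sgrad_eq_radial_deriv:
  assumes "0 < norm y" "norm y < R"
  shows "sgrad w S y = (radial_deriv w R e (norm y) / norm y) *\<^sub>R y"
  using assms eq_profile has_real_derivative_profile by (intro sgrad_radial) auto

lemma sgrad_zero: "sgrad w S 0 = 0"
  using R_pos radial differentiable_at_interior by (intro sgrad_even_zero) auto

lemma radial_deriv_zero: "radial_deriv w R e 0 = 0"
  using sgrad_zero unfolding radial_deriv_def by simp

lemma slap_eq_radial_deriv:
  assumes "0 < s" "s < R"
  shows "slap w S (s *\<^sub>R e) = deriv (radial_deriv w R e) s + (real CARD('n) - 1) * radial_deriv w R e s / s"
  using sdiv_radial[of "s *\<^sub>R e" R "sgrad w S" "radial_deriv w R e"] assms norm_e
    sgrad_eq_radial_deriv differentiable_radial_deriv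
  by (simp add: slap_def DERIV_deriv_iff_real_differentiable)

lemma norm_sgrad:
  "0 < norm y \<Longrightarrow> norm y < R \<Longrightarrow> norm (sgrad w S y) = \<bar>radial_deriv w R e (norm y)\<bar>"
  by (simp add: sgrad_eq_radial_deriv)

lemma has_integral_weighted_slap:
  assumes "0 \<le> r" "r \<le> R"
  shows "((\<lambda>s. s ^ (CARD('n) - 1) * slap w S (s *\<^sub>R e)) has_integral
      r ^ (CARD('n) - 1) * radial_deriv w R e r) {0..r}"
  using assms continuous_on_subset[OF continuous_on_radial_deriv] radial_deriv_zero
    differentiable_radial_deriv slap_eq_radial_deriv
  by (intro has_integral_radial_divergence[where G'="deriv (radial_deriv w R e)"])
    (auto simp: Suc_leI DERIV_deriv_iff_real_differentiable)

lemma sdiv_scaled_sgrad: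
  assumes c: "\<And>y. 0 < norm y \<Longrightarrow> norm y < R \<Longrightarrow> c y = k (norm y)"
    and s: "0 < s" "s < R" and k: "k differentiable (at s)"
  shows "sdiv (\<lambda>y. c y *\<^sub>R sgrad w S y) S (s *\<^sub>R e) =
    deriv (\<lambda>s. k s * radial_deriv w R e s) s + (real CARD('n) - 1) * (k s * radial_deriv w R e s) / s"
proof -
  define h where "h s = k s * radial_deriv w R e s" for s
  have "sdiv (\<lambda>y. c y *\<^sub>R sgrad w S y) S (s *\<^sub>R e) =
      deriv h (norm (s *\<^sub>R e)) + (real CARD('n) - 1) * h (norm (s *\<^sub>R e)) / norm (s *\<^sub>R e)"
  proof (rule sdiv_radial)
    show "c y *\<^sub>R sgrad w S y = (h (norm y) / norm y) *\<^sub>R y" if "0 < norm y" "norm y < R" for y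
      using that by (simp add: c sgrad_eq_radial_deriv h_def)
    have "h differentiable (at s)"
      unfolding h_def using k differentiable_radial_deriv s by (intro differentiable_mult) auto
    then show "(h has_real_derivative deriv h (norm (s *\<^sub>R e))) (at (norm (s *\<^sub>R e)))"
      using s norm_e by (simp add: DERIV_deriv_iff_real_differentiable)
  qed (use s norm_e in auto)
  then show ?thesis
    using s norm_e by (simp add: h_def[abs_def])
qed

lemma deriv_profile:
  assumes "0 < r" "r < R"
  shows "deriv (profile w e) r = radial_deriv w R e r"
    and "deriv (deriv (profile w e)) r = deriv (radial_deriv w R e) r"
proof -
  have eq: "deriv (profile w e) s = radial_deriv w R e s" if "0 \<le> s" "s < R" for s
    using has_real_derivative_profile[OF that] by (rule DERIV_imp_deriv)
  then show "deriv (profile w e) r = radial_deriv w R e r"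
    using assms by simp
  show "deriv (deriv (profile w e)) r = deriv (radial_deriv w R e) r"
    using assms eq by (intro deriv_cong_ev) (auto simp: eventually_nhds intro!: exI[of _ "{0<..<R}"])
qed

end

section \<open>The fluxes of the chemotaxis system\<close>

definition diffusion_flux :: "(real^'n \<Rightarrow> real) \<Rightarrow> (real^'n) set \<Rightarrow> real^'n \<Rightarrow> real^'n" where
  "diffusion_flux w S y = (w y / sqrt ((w y)\<^sup>2 + (norm (sgrad w S y))\<^sup>2)) *\<^sub>R sgrad w S y"

definition sensitivity_flux ::
    "(real^'n \<Rightarrow> real) \<Rightarrow> (real^'n \<Rightarrow> real) \<Rightarrow> (real^'n) set \<Rightarrow> real^'n \<Rightarrow> real^'n" where
  "sensitivity_flux w W S y = (w y / sqrt (1 + (norm (sgrad W S y))\<^sup>2)) *\<^sub>R sgrad W S y"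

locale radial_C2_pair = u: radial_C2 w R e + v: radial_C2 W R e
  for w W :: "real^'n \<Rightarrow> real" and R e +
  assumes w_pos: "\<And>x. norm x \<le> R \<Longrightarrow> 0 < w x"
begin

abbreviation "g \<equiv> profile w e"
abbreviation "G \<equiv> radial_deriv w R e"
abbreviation "H \<equiv> radial_deriv W R e"

abbreviation radial_diffusion_flux :: "real \<Rightarrow> real" where
  "radial_diffusion_flux s \<equiv> g s / sqrt ((g s)\<^sup>2 + (G s)\<^sup>2) * G s"

abbreviation radial_sensitivity_flux :: "real \<Rightarrow> real" where
  "radial_sensitivity_flux s \<equiv> g s / sqrt (1 + (H s)\<^sup>2) * H s"

lemma profile_pos: "0 \<le> s \<Longrightarrow> s \<le> R \<Longrightarrow> 0 < g s"
  using w_pos[of "s *\<^sub>R e"] u.norm_e by (simp add: profile_def)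

lemma differentiable_profile: "0 < s \<Longrightarrow> s < R \<Longrightarrow> g differentiable (at s)"
  using u.has_real_derivative_profile[of s] by (auto simp: real_differentiable_def)

lemma differentiable_flux_coefficients:
  assumes "0 < s" "s < R"
  shows "(\<lambda>s. g s / sqrt ((g s)\<^sup>2 + (G s)\<^sup>2)) differentiable (at s)"
    and "(\<lambda>s. g s / sqrt (1 + (H s)\<^sup>2)) differentiable (at s)"
proof -
  have gGH: "g differentiable (at s)" "G differentiable (at s)" "H differentiable (at s)"
    using differentiable_profile u.differentiable_radial_deriv v.differentiable_radial_deriv assms by auto
  moreover have "0 < (g s)\<^sup>2 + (G s)\<^sup>2"
    using profile_pos[of s] assms by (intro add_pos_nonneg) auto
  ultimately have "(\<lambda>s. sqrt ((g s)\<^sup>2 + (G s)\<^sup>2)) differentiable (at s)"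
    "(\<lambda>s. sqrt (1 + (H s)\<^sup>2)) differentiable (at s)"
    by (intro differentiable_sqrt; auto intro!: derivative_intros add_pos_nonneg)+
  then show "(\<lambda>s. g s / sqrt ((g s)\<^sup>2 + (G s)\<^sup>2)) differentiable (at s)"
    "(\<lambda>s. g s / sqrt (1 + (H s)\<^sup>2)) differentiable (at s)"
    using gGH \<open>0 < (g s)\<^sup>2 + (G s)\<^sup>2\<close> by (intro derivative_intros; auto simp: add_nonneg_eq_0_iff)+
qed

lemma differentiable_radial_fluxes:
  assumes "0 < s" "s < R"
  shows "radial_diffusion_flux differentiable (at s)" "radial_sensitivity_flux differentiable (at s)"
  using assms
  by (intro differentiable_mult differentiable_flux_coefficients[OF assms]
      u.differentiable_radial_deriv v.differentiable_radial_deriv; simp)+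

lemma sdiv_diffusion_flux:
  assumes "0 < s" "s < R"
  shows "sdiv (diffusion_flux w u.S) u.S (s *\<^sub>R e) =
    deriv radial_diffusion_flux s + (real CARD('n) - 1) * radial_diffusion_flux s / s"
  unfolding diffusion_flux_def[abs_def]
  using u.eq_profile u.norm_sgrad differentiable_flux_coefficients(1)[OF assms]
  by (intro u.sdiv_scaled_sgrad[OF _ assms]) auto

lemma sdiv_sensitivity_flux:
  assumes "0 < s" "s < R"
  shows "sdiv (sensitivity_flux w W u.S) u.S (s *\<^sub>R e) =
    deriv radial_sensitivity_flux s + (real CARD('n) - 1) * radial_sensitivity_flux s / s"
  unfolding sensitivity_flux_def[abs_def]
  using u.eq_profile v.norm_sgrad differentiable_flux_coefficients(2)[OF assms]
  by (intro v.sdiv_scaled_sgrad[OF _ assms]) auto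

lemma inner_fluxes:
  assumes "0 < s" "s < R"
  shows "diffusion_flux w u.S (s *\<^sub>R e) \<bullet> e = radial_diffusion_flux s"
    and "sensitivity_flux w W u.S (s *\<^sub>R e) \<bullet> e = radial_sensitivity_flux s"
proof -
  have "e \<bullet> e = 1"
    using u.norm_e by (simp add: dot_square_norm)
  then show "diffusion_flux w u.S (s *\<^sub>R e) \<bullet> e = radial_diffusion_flux s"
    "sensitivity_flux w W u.S (s *\<^sub>R e) \<bullet> e = radial_sensitivity_flux s"
    using assms u.norm_e u.eq_profile[of "s *\<^sub>R e"] u.sgrad_eq_radial_deriv[of "s *\<^sub>R e"]
      v.sgrad_eq_radial_deriv[of "s *\<^sub>R e"]
    by (simp_all add: diffusion_flux_def sensitivity_flux_def)
qed

lemma continuous_on_fluxes: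
  "continuous_on u.S (diffusion_flux w u.S)" "continuous_on u.S (sensitivity_flux w W u.S)"
proof -
  have "sqrt ((w y)\<^sup>2 + (norm (sgrad w u.S y))\<^sup>2) \<noteq> 0" "sqrt (1 + (norm (sgrad W u.S y))\<^sup>2) \<noteq> 0"
    if "y \<in> u.S" for y
    using w_pos[of y] that by (auto simp: add_pos_nonneg add_nonneg_eq_0_iff)
  then show "continuous_on u.S (diffusion_flux w u.S)" "continuous_on u.S (sensitivity_flux w W u.S)"
    unfolding diffusion_flux_def[abs_def] sensitivity_flux_def[abs_def]
    using u.continuous_on_w u.continuous_on_sgrad v.continuous_on_sgrad
    by (auto intro!: continuous_intros)
qed

lemma has_integral_flux_divergence:
  assumes no_flux: "(diffusion_flux w u.S (R *\<^sub>R e) - chi *\<^sub>R sensitivity_flux w W u.S (R *\<^sub>R e)) \<bullet> e = 0"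
  shows "((\<lambda>s. s ^ (CARD('n) - 1) * (sdiv (diffusion_flux w u.S) u.S (s *\<^sub>R e)
      - chi * sdiv (sensitivity_flux w W u.S) u.S (s *\<^sub>R e))) has_integral 0) {0..R}"
proof -
  \<comment> \<open>The radial component of the total flux; it vanishes at \<open>0\<close> by symmetry and at \<open>R\<close> by assumption.\<close>
  define a where "a s = (diffusion_flux w u.S (s *\<^sub>R e) - chi *\<^sub>R sensitivity_flux w W u.S (s *\<^sub>R e)) \<bullet> e" for s
  have a: "a s = radial_diffusion_flux s - chi * radial_sensitivity_flux s" if "0 < s" "s < R" for s
    using inner_fluxes[OF that] by (simp add: a_def inner_diff_left)
  have "continuous_on {0..R} (\<lambda>s. diffusion_flux w u.S (s *\<^sub>R e))"
    "continuous_on {0..R} (\<lambda>s. sensitivity_flux w W u.S (s *\<^sub>R e))"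
    using u.norm_e by (auto intro!: continuous_on_compose2[OF continuous_on_fluxes(1)]
        continuous_on_compose2[OF continuous_on_fluxes(2)] continuous_intros)
  then have a_cont: "continuous_on {0..R} a"
    unfolding a_def by (intro continuous_intros)
  have a0: "a 0 = 0"
    by (simp add: a_def diffusion_flux_def sensitivity_flux_def u.sgrad_zero v.sgrad_zero)
  have a_deriv: "(a has_real_derivative deriv radial_diffusion_flux s - chi * deriv radial_sensitivity_flux s) (at s)"
    if s: "0 < s" "s < R" for s
    using differentiable_radial_fluxes[OF s]
    unfolding DERIV_deriv_iff_real_differentiable[symmetric]
    by (intro has_field_derivative_transform_within_open[where S="{0<..<R}", OF _ _ _ a[symmetric]]
        derivative_intros DERIV_cmult) (use s in auto)
  have "((\<lambda>s. s ^ (CARD('n) - 1) * (sdiv (diffusion_flux w u.S) u.S (s *\<^sub>R e)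
      - chi * sdiv (sensitivity_flux w W u.S) u.S (s *\<^sub>R e))) has_integral R ^ (CARD('n) - 1) * a R) {0..R}"
  proof (rule has_integral_radial_divergence[OF _ _ a_cont a0 a_deriv])
    fix s :: real
    assume s: "0 < s" "s < R"
    have "dA + k * A / s - chi * (dB + k * B / s) = dA - chi * dB + k * (A - chi * B) / s" for dA dB k A B
      using s by (simp add: field_simps)
    then show "s ^ (CARD('n) - 1) * (sdiv (diffusion_flux w u.S) u.S (s *\<^sub>R e)
        - chi * sdiv (sensitivity_flux w W u.S) u.S (s *\<^sub>R e))
      = s ^ (CARD('n) - 1) * (deriv radial_diffusion_flux s - chi * deriv radial_sensitivity_flux s
          + (real CARD('n) - 1) * a s / s)"
      unfolding sdiv_diffusion_flux[OF s] sdiv_sensitivity_flux[OF s] a[OF s] by (simp only:)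
  qed (use u.R_pos in \<open>auto simp: Suc_leI\<close>)
  then show ?thesis
    using no_flux by (simp add: a_def)
qed
end

section \<open>Radial classical solutions\<close>

lemma radial_gradient_eq:
  fixes N :: nat and r \<mu> P G :: real
  assumes "1 \<le> N" "0 < r" "r ^ (N - 1) * G = \<mu> * r ^ N / N - P"
  shows "G = r * (\<mu> / N - P / r ^ N)"
proof -
  have "G * r ^ N = r * (r ^ (N - 1) * G)"
    using assms(1) power_minus_mult[of N r] by (simp add: ac_simps)
  also have "\<dots> = r * (\<mu> * r ^ N / N - P)"
    by (simp only: assms(3))
  finally show ?thesis
    using assms(2) by (simp add: field_simps)
qed

lemma radial_gradient_bounds:
  fixes N :: nat and r R \<mu> M P G :: real
  assumes N: "1 \<le> N" and r: "0 < r" and G: "r ^ (N - 1) * G = \<mu> * r ^ N / N - P"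
    and P: "0 \<le> P" "P \<le> \<mu> * R ^ N / N" "P \<le> M * r ^ N / N" and \<mu>: "0 \<le> \<mu>" "\<mu> \<le> M"
  shows "- (\<mu> * R ^ N / N) * r powr (1 - real N) \<le> G" "G \<le> \<mu> / N * r" "\<bar>G\<bar> \<le> M / N * r"
proof -
  define z where "z = P / r ^ N"
  have Gz: "G = r * (\<mu> / N) - r * z"
    unfolding z_def radial_gradient_eq[OF N r G] by (rule right_diff_distrib)
  have "r * z = P * (r / r ^ N)"
    by (simp add: z_def)
  also have "\<dots> \<le> (\<mu> * R ^ N / N) * (r / r ^ N)"
    using P(2) r by (intro mult_right_mono) auto
  also have "\<dots> = (\<mu> * R ^ N / N) * r powr (1 - real N)"
    using r by (simp add: powr_diff powr_realpow)
  finally have "r * z \<le> (\<mu> * R ^ N / N) * r powr (1 - real N)" .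
  moreover have "0 \<le> r * (\<mu> / N)" "r * (\<mu> / N) \<le> r * (M / N)"
    using \<mu> r by (simp_all add: divide_right_mono)
  moreover have "0 \<le> r * z" "r * z \<le> r * (M / N)"
    using P(1,3) r N by (simp_all add: z_def field_simps)
  ultimately show "- (\<mu> * R ^ N / N) * r powr (1 - real N) \<le> G" "G \<le> \<mu> / N * r" "\<bar>G\<bar> \<le> M / N * r"
    unfolding Gz by (simp_all add: mult.commute abs_le_iff)
qed

lemma radial_gradient_deriv_bound:
  fixes N :: nat and r \<mu> M P G G' q :: real
  assumes N: "1 \<le> N" and r: "0 < r" and G: "r ^ (N - 1) * G = \<mu> * r ^ N / N - P"
    and G': "G' = \<mu> - q - (real N - 1) * G / r"
    and P: "0 \<le> P" "P \<le> M * r ^ N / N" and q: "0 < q" "q \<le> M" and \<mu>: "0 \<le> \<mu>" "\<mu> \<le> M"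
  shows "\<bar>G'\<bar> \<le> M"
proof -
  define z where "z = P / r ^ N"
  have N1: "0 \<le> real N - 1"
    using N by simp
  have z: "0 \<le> z" "z \<le> M / N"
    using P r N by (simp_all add: z_def field_simps)
  have "G' = \<mu> / N - q + (real N - 1) * z"
    using r N unfolding G' radial_gradient_eq[OF N r G] z_def by (simp add: field_simps)
  moreover have "0 \<le> (real N - 1) * z"
    using N1 z(1) by (rule mult_nonneg_nonneg)
  moreover have "(real N - 1) * z \<le> (real N - 1) * (M / N)"
    using z(2) N1 by (rule mult_left_mono)
  moreover have "\<mu> / N + (real N - 1) * (M / N) \<le> M" "0 \<le> \<mu> / N"
    using \<mu> N by (simp_all add: field_simps)
  ultimately show ?thesis
    using q by (simp add: abs_le_iff)
qed

locale radial_classical_solution =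
  fixes R chi \<mu> :: real and u0 :: "real^'n \<Rightarrow> real" and T :: ereal
    and u v :: "real^'n \<Rightarrow> real \<Rightarrow> real"
  assumes R_pos: "R > 0" and solution: "classical_solution R chi \<mu> u0 T u v"
begin

abbreviation "S \<equiv> cball (0::real^'n) R"
abbreviation "I \<equiv> {t::real. 0 \<le> t \<and> ereal t < T}"

lemma
  shows C21_u: "C21 u S I" and C20_v: "C20 v S I"
    and u_pos: "\<And>x t. x \<in> S \<Longrightarrow> t \<in> I \<Longrightarrow> 0 < u x t"
    and radial_u: "radial_on u R I" and radial_v: "radial_on v R I"
    and u_equation: "\<And>x t. norm x < R \<Longrightarrow> 0 < t \<Longrightarrow> ereal t < T \<Longrightarrow>
      tder u I x t = sdiv (diffusion_flux (\<lambda>z. u z t) S) S x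
        - chi * sdiv (sensitivity_flux (\<lambda>z. u z t) (\<lambda>z. v z t) S) S x"
    and v_equation: "\<And>x t. norm x < R \<Longrightarrow> 0 < t \<Longrightarrow> ereal t < T \<Longrightarrow>
      slap (\<lambda>z. v z t) S x = \<mu> - u x t"
    and no_flux: "\<And>x t. norm x = R \<Longrightarrow> 0 < t \<Longrightarrow> ereal t < T \<Longrightarrow>
      (diffusion_flux (\<lambda>z. u z t) S x - chi *\<^sub>R sensitivity_flux (\<lambda>z. u z t) (\<lambda>z. v z t) S x)
        \<bullet> (inverse R *\<^sub>R x) = 0"
    and u_initial: "\<And>x. x \<in> S \<Longrightarrow> u x 0 = u0 x"
  using solution unfolding classical_solution_def Let_def diffusion_flux_def[abs_def]
    sensitivity_flux_def[abs_def]
  by (auto simp: algebra_simps)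

lemma radial_C2_pair_at:
  assumes "t \<in> I" "norm e = 1"
  shows "radial_C2_pair (\<lambda>x. u x t) (\<lambda>x. v x t) R e"
proof unfold_locales
  show "Ck 2 (\<lambda>x. u x t) S" "Ck 2 (\<lambda>x. v x t) S"
    using C21_u C20_v assms(1) unfolding C21_def C20_def by auto
  show "u x t = u y t" "v x t = v y t" if "norm x \<le> R" "norm y \<le> R" "norm x = norm y" for x y
    using radial_u radial_v that assms(1) unfolding radial_on_def by blast+
  show "0 < u x t" if "norm x \<le> R" for x
    using u_pos that assms(1) by simp
qed (use R_pos assms(2) in auto)

lemma has_integral_weighted_tder:
  assumes "0 < \<tau>" "ereal \<tau> < T" "norm e = 1"
  shows "((\<lambda>s. s ^ (CARD('n) - 1) * tder u I (s *\<^sub>R e) \<tau>) has_integral 0) {0..R}"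
proof -
  interpret radial_C2_pair "\<lambda>x. u x \<tau>" "\<lambda>x. v x \<tau>" R e
    using radial_C2_pair_at assms by simp
  have "(diffusion_flux (\<lambda>z. u z \<tau>) S (R *\<^sub>R e)
      - chi *\<^sub>R sensitivity_flux (\<lambda>z. u z \<tau>) (\<lambda>z. v z \<tau>) S (R *\<^sub>R e)) \<bullet> e = 0"
    using no_flux[of "R *\<^sub>R e" \<tau>] assms R_pos by simp
  from has_integral_flux_divergence[OF this] show ?thesis
  proof (rule has_integral_spike[where S="{0, R}", rotated 2])
    fix s
    assume "s \<in> {0..R} - {0, R}"
    then show "s ^ (CARD('n) - 1) * tder u I (s *\<^sub>R e) \<tau> =
        s ^ (CARD('n) - 1) * (sdiv (diffusion_flux (\<lambda>z. u z \<tau>) S) S (s *\<^sub>R e)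
          - chi * sdiv (sensitivity_flux (\<lambda>z. u z \<tau>) (\<lambda>z. v z \<tau>) S) S (s *\<^sub>R e))"
      using u_equation[of "s *\<^sub>R e" \<tau>] assms by simp
  qed simp
qed

lemma Icc_subset_time_interval: "t \<in> I \<Longrightarrow> {0..t} \<subseteq> I"
  by (auto intro: le_less_trans[of _ "ereal t"])

lemma has_real_derivative_tder:
  "x \<in> S \<Longrightarrow> \<tau> \<in> I \<Longrightarrow> ((\<lambda>\<tau>. u x \<tau>) has_real_derivative tder u I x \<tau>) (at \<tau> within I)"
  using C21_u unfolding C21_def tder_def by (blast intro: has_real_derivative_frechet_derivative)

lemma continuous_on_tder_ray:
  assumes t: "t \<in> I" and e: "norm e = 1"
  shows "continuous_on ({0..R} \<times> {0..t}) (\<lambda>(s, \<tau>). tder u I (s *\<^sub>R e) \<tau>)"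
proof -
  have img: "(\<lambda>p. (fst p *\<^sub>R e, snd p)) ` ({0..R} \<times> {0..t}) \<subseteq> S \<times> I"
    using e Icc_subset_time_interval[OF t] by auto
  have "continuous_on (S \<times> I) (\<lambda>p. tder u I (fst p) (snd p))"
    using C21_u unfolding C21_def case_prod_beta by blast
  from continuous_on_compose2[OF this _ img] show ?thesis
    unfolding case_prod_beta by (simp add: continuous_intros)
qed

lemma weighted_mass_conserved:
  assumes t: "t \<in> I" and e: "norm e = 1"
  shows "integral {0..R} (\<lambda>s. s ^ (CARD('n) - 1) * u (s *\<^sub>R e) t)
    = integral {0..R} (\<lambda>s. s ^ (CARD('n) - 1) * u0 (s *\<^sub>R e))"
proof -
  have cont: "continuous_on {0..R} (\<lambda>s. s ^ (CARD('n) - 1) * u (s *\<^sub>R e) \<tau>)" if "\<tau> \<in> I" for \<tau>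
    using radial_C2.continuous_on_profile[OF radial_C2_pair.axioms(1)[OF radial_C2_pair_at[OF that e]]]
    by (auto simp: profile_def intro!: continuous_intros)
  have "continuous_on ({0..R} \<times> {0..t}) (\<lambda>(s, \<tau>). s ^ (CARD('n) - 1) * tder u I (s *\<^sub>R e) \<tau>)"
    using continuous_on_tder_ray[OF t e] unfolding case_prod_beta by (intro continuous_intros)
  moreover have "((\<lambda>\<tau>. s ^ (CARD('n) - 1) * u (s *\<^sub>R e) \<tau>) has_real_derivative
      s ^ (CARD('n) - 1) * tder u I (s *\<^sub>R e) \<tau>) (at \<tau> within {0..t})"
    if "s \<in> {0..R}" "\<tau> \<in> {0..t}" for s \<tau>
    using that e Icc_subset_time_interval[OF t]
    by (intro DERIV_cmult DERIV_subset[OF has_real_derivative_tder]) auto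
  moreover have "integral {0..R} (\<lambda>s. s ^ (CARD('n) - 1) * tder u I (s *\<^sub>R e) \<tau>) = 0"
    if "0 < \<tau>" "\<tau> \<le> t" for \<tau>
  proof -
    have "ereal \<tau> < T"
      using that t by (auto intro: le_less_trans[of _ "ereal t"])
    then show ?thesis
      using has_integral_weighted_tder[of \<tau> e] that e by (simp add: integral_unique)
  qed
  ultimately have "integral {0..R} (\<lambda>s. s ^ (CARD('n) - 1) * u (s *\<^sub>R e) t)
      = integral {0..R} (\<lambda>s. s ^ (CARD('n) - 1) * u (s *\<^sub>R e) 0)"
    using t cont[of t] cont[of 0] Icc_subset_time_interval[OF t]
    by (intro integral_conserved_by_vanishing_flux) auto
  also have "\<dots> = integral {0..R} (\<lambda>s. s ^ (CARD('n) - 1) * u0 (s *\<^sub>R e))"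
    using e u_initial by (intro integral_cong) auto
  finally show ?thesis .
qed


lemma weighted_mass_eq:
  assumes \<mu>: "\<mu> = integral (ball 0 R) u0 / measure lebesgue (ball (0::real^'n) R)"
    and t: "t \<in> I" and e: "norm e = 1"
  shows "integral {0..R} (\<lambda>s. s ^ (CARD('n) - 1) * u (s *\<^sub>R e) t) = \<mu> * R ^ CARD('n) / CARD('n)"
proof -
  have "0 \<in> I"
    using Icc_subset_time_interval[OF t] t by auto
  then interpret u0: radial_C2 "\<lambda>x. u x 0" R e
    using radial_C2_pair.axioms(1)[OF radial_C2_pair_at] e by blast
  have u0_eq: "u0 y = u0 (norm y *\<^sub>R e)" if "norm y \<le> R" for y
    using that e u_initial u0.eq_profile[of y] by (simp add: profile_def)
  have "continuous_on S u0"
    using u0.continuous_on_w u_initial by (rule continuous_on_eq) simp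
  moreover have "continuous_on {0..R} (\<lambda>s. u0 (s *\<^sub>R e))"
    using u0.continuous_on_profile unfolding profile_def
    by (rule continuous_on_eq) (use e u_initial in auto)
  ultimately have "integral (ball 0 R) u0 = real CARD('n) * unit_ball_vol (real CARD('n))
      * integral {0..R} (\<lambda>s. s ^ (CARD('n) - 1) * u0 (s *\<^sub>R e))"
    using R_pos u0_eq by (intro integral_ball_radial) auto
  moreover have "measure lebesgue (ball (0::real^'n) R) = unit_ball_vol (real CARD('n)) * R ^ CARD('n)"
    using R_pos by (intro measure_lebesgue_ball) simp
  ultimately have "\<mu> = real CARD('n) * integral {0..R} (\<lambda>s. s ^ (CARD('n) - 1) * u0 (s *\<^sub>R e)) / R ^ CARD('n)"
    using unit_ball_vol_pos[of "real CARD('n)"] R_pos unfolding \<mu> by (simp add: less_imp_neq[symmetric])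
  then show ?thesis
    unfolding weighted_mass_conserved[OF t e] using R_pos by (simp add: field_simps)
qed

lemma v_radial_deriv:
  assumes t: "0 < t" "ereal t < T" and e: "norm e = 1" and r: "0 < r" "r < R"
  defines "G \<equiv> radial_deriv (\<lambda>x. v x t) R e"
  shows "deriv G r = \<mu> - u (r *\<^sub>R e) t - (real CARD('n) - 1) * G r / r"
    and "r ^ (CARD('n) - 1) * G r
      = \<mu> * r ^ CARD('n) / CARD('n) - integral {0..r} (\<lambda>s. s ^ (CARD('n) - 1) * u (s *\<^sub>R e) t)"
proof -
  interpret v: radial_C2 "\<lambda>x. v x t" R e
    using radial_C2_pair.axioms(2)[OF radial_C2_pair_at] t e by simp
  show "deriv G r = \<mu> - u (r *\<^sub>R e) t - (real CARD('n) - 1) * G r / r"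
    using v.slap_eq_radial_deriv[OF r] v_equation[of "r *\<^sub>R e" t] t e r unfolding G_def by simp
  have "((\<lambda>s. s ^ (CARD('n) - 1) * slap (\<lambda>x. v x t) S (s *\<^sub>R e)) has_integral r ^ (CARD('n) - 1) * G r) {0..r}"
    unfolding G_def using r by (intro v.has_integral_weighted_slap) auto
  then have slap_int: "((\<lambda>s. \<mu> * s ^ (CARD('n) - 1) - s ^ (CARD('n) - 1) * u (s *\<^sub>R e) t) has_integral
      r ^ (CARD('n) - 1) * G r) {0..r}"
  proof (rule has_integral_eq[rotated])
    fix s
    assume "s \<in> {0..r}"
    then have "slap (\<lambda>x. v x t) S (s *\<^sub>R e) = \<mu> - u (s *\<^sub>R e) t"
      using v_equation[of "s *\<^sub>R e" t] t e r by simp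
    then show "s ^ (CARD('n) - 1) * slap (\<lambda>x. v x t) S (s *\<^sub>R e)
        = \<mu> * s ^ (CARD('n) - 1) - s ^ (CARD('n) - 1) * u (s *\<^sub>R e) t"
      unfolding \<open>slap (\<lambda>x. v x t) S (s *\<^sub>R e) = \<mu> - u (s *\<^sub>R e) t\<close> by (simp add: algebra_simps)
  qed
  have "((\<lambda>s. \<mu> * s ^ (CARD('n) - 1)) has_integral \<mu> * (r ^ CARD('n) / CARD('n))) {0..r}"
    using r by (intro has_integral_mult_right has_integral_power_pred) (auto simp: Suc_leI)
  from has_integral_diff[OF this slap_int]
  have "((\<lambda>s. s ^ (CARD('n) - 1) * u (s *\<^sub>R e) t) has_integral
      \<mu> * (r ^ CARD('n) / CARD('n)) - r ^ (CARD('n) - 1) * G r) {0..r}"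
    by simp
  then show "r ^ (CARD('n) - 1) * G r
      = \<mu> * r ^ CARD('n) / CARD('n) - integral {0..r} (\<lambda>s. s ^ (CARD('n) - 1) * u (s *\<^sub>R e) t)"
    by (simp add: integral_unique)
qed

lemma u_le_SUP_abs:
  assumes t: "t \<in> I" and e: "norm e = 1" and s: "s \<in> {0..R}"
  shows "u (s *\<^sub>R e) t \<le> (SUP x\<in>{x::real^'n. 0 < norm x \<and> norm x < R}. \<bar>u x t\<bar>)"
proof -
  interpret w: radial_C2 "\<lambda>x. u x t" R e
    using radial_C2_pair.axioms(1)[OF radial_C2_pair_at[OF t e]] .
  have "compact ((\<lambda>x. \<bar>u x t\<bar>) ` S)"
    using w.continuous_on_w by (intro compact_continuous_image continuous_intros) auto
  then have bdd: "bdd_above ((\<lambda>x. \<bar>u x t\<bar>) ` {x::real^'n. 0 < norm x \<and> norm x < R})"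
    by (rule bdd_above_mono[OF bounded_imp_bdd_above[OF compact_imp_bounded]]) auto
  have "profile (\<lambda>x. u x t) e s' \<le> (SUP x\<in>{x::real^'n. 0 < norm x \<and> norm x < R}. \<bar>u x t\<bar>)"
    if "s' \<in> {0<..<R}" for s'
  proof -
    have "\<bar>u (s' *\<^sub>R e) t\<bar> \<le> (SUP x\<in>{x::real^'n. 0 < norm x \<and> norm x < R}. \<bar>u x t\<bar>)"
      using that e by (intro cSUP_upper[OF _ bdd]) auto
    then show ?thesis
      by (simp add: profile_def)
  qed
  then have "profile (\<lambda>x. u x t) e s \<le> (SUP x\<in>{x::real^'n. 0 < norm x \<and> norm x < R}. \<bar>u x t\<bar>)"
    using continuous_le_on_closure[of "{0<..<R}" "profile (\<lambda>x. u x t) e"] w.continuous_on_profile s R_pos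
    by (simp add: closure_greaterThanLessThan)
  then show ?thesis
    by (simp add: profile_def)
qed


lemma weighted_mass_bounds:
  assumes t: "t \<in> I" and e: "norm e = 1" and r: "0 \<le> r" "r \<le> R"
  defines "P \<equiv> \<lambda>r. integral {0..r} (\<lambda>s. s ^ (CARD('n) - 1) * u (s *\<^sub>R e) t)"
    and "M \<equiv> SUP x\<in>{x::real^'n. 0 < norm x \<and> norm x < R}. \<bar>u x t\<bar>"
  shows "0 \<le> P r" "P r \<le> P R" "P r \<le> M * r ^ CARD('n) / CARD('n)"
proof -
  interpret w: radial_C2 "\<lambda>x. u x t" R e
    using radial_C2_pair.axioms(1)[OF radial_C2_pair_at[OF t e]] .
  have int: "(\<lambda>s. s ^ (CARD('n) - 1) * u (s *\<^sub>R e) t) integrable_on {0..a}" if "a \<le> R" for a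
    using continuous_on_subset[OF w.continuous_on_profile, of "{0..a}"] that
    by (intro integrable_continuous_real continuous_intros) (auto simp: profile_def)
  have nonneg: "0 \<le> s ^ (CARD('n) - 1) * u (s *\<^sub>R e) t" if "s \<in> {0..R}" for s
    using u_pos[of "s *\<^sub>R e" t] that t e by simp
  show "0 \<le> P r"
    unfolding P_def using int[OF r(2)] nonneg r by (intro integral_nonneg) auto
  show "P r \<le> P R"
    unfolding P_def using int[OF r(2)] int[of R] nonneg r by (intro integral_subset_le) auto
  have "P r \<le> integral {0..r} (\<lambda>s. M * s ^ (CARD('n) - 1))"
    unfolding P_def
  proof (rule integral_le[OF int[OF r(2)]])
    show "(\<lambda>s. M * s ^ (CARD('n) - 1)) integrable_on {0..r}"
      by (intro integrable_continuous_real continuous_intros)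
    show "s ^ (CARD('n) - 1) * u (s *\<^sub>R e) t \<le> M * s ^ (CARD('n) - 1)" if "s \<in> {0..r}" for s
    proof -
      have "u (s *\<^sub>R e) t \<le> M"
        using u_le_SUP_abs[OF t e, of s] that r unfolding M_def by simp
      then show ?thesis
        using that by (simp add: mult.commute[of M] mult_left_mono)
    qed
  qed
  also have "\<dots> = M * r ^ CARD('n) / CARD('n)"
    using has_integral_power_pred[OF r(1), of "CARD('n)"] by (simp add: Suc_leI integral_unique)
  finally show "P r \<le> M * r ^ CARD('n) / CARD('n)" .
qed

lemma mean_bounds:
  fixes e :: "real^'n"
  assumes \<mu>: "\<mu> = integral (ball 0 R) u0 / measure lebesgue (ball (0::real^'n) R)"
    and t: "t \<in> I" and e: "norm e = 1"
  shows "0 \<le> \<mu>" "\<mu> \<le> (SUP x\<in>{x::real^'n. 0 < norm x \<and> norm x < R}. \<bar>u x t\<bar>)"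
proof -
  have "0 \<le> \<mu> * R ^ CARD('n) / CARD('n)"
    "\<mu> * R ^ CARD('n) / CARD('n) \<le> (SUP x\<in>{x::real^'n. 0 < norm x \<and> norm x < R}. \<bar>u x t\<bar>) * R ^ CARD('n) / CARD('n)"
    using weighted_mass_bounds(1)[OF t e _ order_refl] weighted_mass_bounds(3)[OF t e _ order_refl] R_pos
    unfolding weighted_mass_eq[OF \<mu> t e] by simp_all
  then show "0 \<le> \<mu>" "\<mu> \<le> (SUP x\<in>{x::real^'n. 0 < norm x \<and> norm x < R}. \<bar>u x t\<bar>)"
    using zero_less_power[OF R_pos, of "CARD('n)"] by (simp_all add: zero_le_divide_iff zero_le_mult_iff divide_le_cancel)
qed

lemma v_gradient_estimates:
  assumes \<mu>: "\<mu> = integral (ball 0 R) u0 / measure lebesgue (ball (0::real^'n) R)"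
    and t: "0 < t" "ereal t < T" and e: "norm e = 1" and r: "0 < r" "r < R"
  defines "M \<equiv> SUP x\<in>{x::real^'n. 0 < norm x \<and> norm x < R}. \<bar>u x t\<bar>"
  shows "- (\<mu> * R ^ CARD('n) / CARD('n)) * r powr (1 - real CARD('n)) \<le> deriv (\<lambda>s. v (s *\<^sub>R e) t) r"
    and "deriv (\<lambda>s. v (s *\<^sub>R e) t) r \<le> \<mu> / CARD('n) * r"
    and "\<bar>deriv (\<lambda>s. v (s *\<^sub>R e) t) r\<bar> \<le> M / CARD('n) * r"
    and "\<bar>deriv (deriv (\<lambda>s. v (s *\<^sub>R e) t)) r\<bar> \<le> M"
proof -
  have tI: "t \<in> I"
    using t by simp
  interpret v: radial_C2 "\<lambda>x. v x t" R e
    using radial_C2_pair.axioms(2)[OF radial_C2_pair_at[OF tI e]] .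
  define G where "G = radial_deriv (\<lambda>x. v x t) R e"
  define P where "P = integral {0..r} (\<lambda>s. s ^ (CARD('n) - 1) * u (s *\<^sub>R e) t)"
  have G: "r ^ (CARD('n) - 1) * G r = \<mu> * r ^ CARD('n) / CARD('n) - P"
    "deriv G r = \<mu> - u (r *\<^sub>R e) t - (real CARD('n) - 1) * G r / r"
    using v_radial_deriv[OF t e r] unfolding G_def P_def by auto
  have P: "0 \<le> P" "P \<le> \<mu> * R ^ CARD('n) / CARD('n)" "P \<le> M * r ^ CARD('n) / CARD('n)"
    using weighted_mass_bounds[OF tI e] r unfolding P_def M_def weighted_mass_eq[OF \<mu> tI e] by simp_all
  have \<mu>M: "0 \<le> \<mu>" "\<mu> \<le> M"
    using mean_bounds[OF \<mu> tI e] unfolding M_def .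
  have q: "0 < u (r *\<^sub>R e) t" "u (r *\<^sub>R e) t \<le> M"
    using u_pos[of "r *\<^sub>R e" t] u_le_SUP_abs[OF tI e, of r] tI e r unfolding M_def by auto
  have "(\<lambda>s. v (s *\<^sub>R e) t) = profile (\<lambda>x. v x t) e"
    by (simp add: profile_def[abs_def])
  then show "- (\<mu> * R ^ CARD('n) / CARD('n)) * r powr (1 - real CARD('n)) \<le> deriv (\<lambda>s. v (s *\<^sub>R e) t) r"
    and "deriv (\<lambda>s. v (s *\<^sub>R e) t) r \<le> \<mu> / CARD('n) * r"
    and "\<bar>deriv (\<lambda>s. v (s *\<^sub>R e) t) r\<bar> \<le> M / CARD('n) * r"
    and "\<bar>deriv (deriv (\<lambda>s. v (s *\<^sub>R e) t)) r\<bar> \<le> M"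
    using radial_gradient_bounds[OF _ r(1) G(1) P \<mu>M] radial_gradient_deriv_bound[OF _ r(1) G P(1,3) q \<mu>M]
      v.deriv_profile[OF r]
    unfolding G_def by (simp_all add: Suc_leI)
qed

end

theorem lemma2p5:
  fixes R chi \<mu> :: real and Tmax :: ereal
    and u0 :: "real^'n \<Rightarrow> real" and u v :: "real^'n \<Rightarrow> real \<Rightarrow> real"
  assumes "R > 0" and "chi > 0"
    and "Ck 3 u0 (cball 0 R)"
    and "\<forall>x y. norm x \<le> R \<and> norm y \<le> R \<and> norm x = norm y \<longrightarrow> u0 x = u0 y"
    and "\<forall>x. norm x \<le> R \<longrightarrow> u0 x > 0"
    and "\<forall>x. norm x = R \<longrightarrow> sgrad u0 (cball 0 R) x \<bullet> (inverse R *\<^sub>R x) = 0"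
    and "\<mu> = integral (ball 0 R) u0 / measure lebesgue (ball (0::real^'n) R)"
    and "Tmax > 0"
    and "classical_solution R chi \<mu> u0 Tmax u v"
  shows "\<forall>t r. 0 < t \<and> ereal t < Tmax \<and> 0 < r \<and> r < R \<longrightarrow>
          (\<forall>e::real^'n. norm e = 1 \<longrightarrow>
            (let n = real CARD('n);
                 \<phi> = (\<lambda>s. v (s *\<^sub>R e) t);
                 M = (SUP x\<in>{x::real^'n. 0 < norm x \<and> norm x < R}. \<bar>u x t\<bar>)
             in - (\<mu> * R ^ CARD('n) / n) * r powr (1 - n) \<le> deriv \<phi> r
              \<and> deriv \<phi> r \<le> \<mu> / n * r
              \<and> \<bar>deriv \<phi> r\<bar> \<le> M / n * r
              \<and> \<bar>deriv (deriv \<phi>) r\<bar> \<le> M))"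
proof (intro allI impI, unfold Let_def)
  \<comment> \<open>Besides \<open>R > 0\<close>, the formula for \<open>\<mu>\<close> and the solution property, no hypothesis is needed.\<close>
  fix t r :: real and e :: "real^'n"
  assume "0 < t \<and> ereal t < Tmax \<and> 0 < r \<and> r < R" and "norm e = 1"
  interpret radial_classical_solution R chi \<mu> u0 Tmax u v
    using assms(1,9) by unfold_locales
  show "- (\<mu> * R ^ CARD('n) / real CARD('n)) * r powr (1 - real CARD('n)) \<le> deriv (\<lambda>s. v (s *\<^sub>R e) t) r
      \<and> deriv (\<lambda>s. v (s *\<^sub>R e) t) r \<le> \<mu> / real CARD('n) * r
      \<and> \<bar>deriv (\<lambda>s. v (s *\<^sub>R e) t) r\<bar> \<le> (SUP x\<in>{x::real^'n. 0 < norm x \<and> norm x < R}. \<bar>u x t\<bar>) / real CARD('n) * r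
      \<and> \<bar>deriv (deriv (\<lambda>s. v (s *\<^sub>R e) t)) r\<bar> \<le> (SUP x\<in>{x::real^'n. 0 < norm x \<and> norm x < R}. \<bar>u x t\<bar>)"
    using v_gradient_estimates[OF assms(7)] \<open>norm e = 1\<close> \<open>0 < t \<and> ereal t < Tmax \<and> 0 < r \<and> r < R\<close>
    by blast
qed

end
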